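(* Assume $\mathrm{char}(\mathbb{F})=p>0$ and $0\ne h\in\mathbb{F}[x]$. Then $A_h$ is not a Noetherian UFD.
   Context: For $h\in\mathbb{F}[x]$, $A_h$ is the unital associative $\mathbb{F}$-algebra generated by $x,\hat y$ with defining relation $\hat yx-x\hat y=h$; it is a Noetherian domain. A Noetherian domain $R$ is a Noetherian unique factorization ring (UFR) if every nonzero prime ideal of $R$ contains a nonzero prime ideal generated by a normal element (an element $v$ with $vR=Rv$). It is a Noetherian unique factorization domain (UFD) if it is a Noetherian UFR and, for every height one prime ideal $P$, the ring $R/P$ is a domain. The height of a prime $P$ is the supremum of lengths of chains of prime ideals ending at $P$. *)

theory Defs
  imports "HOL-Algebra.QuotRing" "HOL-Computational_Algebra.Polynomial" "HOL-Library.Extended_Nat"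
begin

text \<open>Elements of A_h are represented in the PBW basis x^i y^j, i.e. as polynomials
  sum_j a_j y^j in y with coefficients a_j in F[x] written on the left.
  Commutation rule: y f = f y + h f' for f in F[x]; this is exactly the
  defining relation y x - x y = h extended as a derivation.\<close>

definition A_delta :: "'a::field poly \<Rightarrow> 'a poly \<Rightarrow> 'a poly" where
  "A_delta h c = h * pderiv c"

definition A_ymul :: "'a::field poly \<Rightarrow> 'a poly poly \<Rightarrow> 'a poly poly" where
  "A_ymul h q = pCons 0 q + map_poly (A_delta h) q"

definition A_mult :: "'a::field poly \<Rightarrow> 'a poly poly \<Rightarrow> 'a poly poly \<Rightarrow> 'a poly poly" where
  "A_mult h p q = (\<Sum>i\<le>degree p. smult (coeff p i) ((A_ymul h ^^ i) q))"

definition A_alg :: "'a::field poly \<Rightarrow> 'a poly poly ring" where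
  "A_alg h = \<lparr>carrier = UNIV, monoid.mult = A_mult h, one = 1, zero = 0, add = (+)\<rparr>"

definition nc_domain :: "('a, 'b) ring_scheme \<Rightarrow> bool" where
  "nc_domain R \<longleftrightarrow> ring R \<and> \<one>\<^bsub>R\<^esub> \<noteq> \<zero>\<^bsub>R\<^esub> \<and>
     (\<forall>a\<in>carrier R. \<forall>b\<in>carrier R. a \<otimes>\<^bsub>R\<^esub> b = \<zero>\<^bsub>R\<^esub> \<longrightarrow> a = \<zero>\<^bsub>R\<^esub> \<or> b = \<zero>\<^bsub>R\<^esub>)"

definition left_ideal :: "'a set \<Rightarrow> ('a, 'b) ring_scheme \<Rightarrow> bool" where
  "left_ideal I R \<longleftrightarrow> additive_subgroup I R \<and> (\<forall>r\<in>carrier R. \<forall>a\<in>I. r \<otimes>\<^bsub>R\<^esub> a \<in> I)"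

definition right_ideal :: "'a set \<Rightarrow> ('a, 'b) ring_scheme \<Rightarrow> bool" where
  "right_ideal I R \<longleftrightarrow> additive_subgroup I R \<and> (\<forall>r\<in>carrier R. \<forall>a\<in>I. a \<otimes>\<^bsub>R\<^esub> r \<in> I)"

definition nc_noetherian :: "('a, 'b) ring_scheme \<Rightarrow> bool" where
  "nc_noetherian R \<longleftrightarrow> ring R \<and>
     (\<forall>I :: nat \<Rightarrow> 'a set. (\<forall>n. left_ideal (I n) R \<and> I n \<subseteq> I (Suc n)) \<longrightarrow>
        (\<exists>N. \<forall>n\<ge>N. I n = I N)) \<and>
     (\<forall>I :: nat \<Rightarrow> 'a set. (\<forall>n. right_ideal (I n) R \<and> I n \<subseteq> I (Suc n)) \<longrightarrow>
        (\<exists>N. \<forall>n\<ge>N. I n = I N))"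

text \<open>Prime ideal of a (noncommutative) ring: proper two-sided ideal P with
  aRb \<subseteq> P implying a \<in> P or b \<in> P (equivalently IJ \<subseteq> P implies I \<subseteq> P or J \<subseteq> P).\<close>
definition nc_prime_ideal :: "('a, 'b) ring_scheme \<Rightarrow> 'a set \<Rightarrow> bool" where
  "nc_prime_ideal R P \<longleftrightarrow> ideal P R \<and> P \<noteq> carrier R \<and>
     (\<forall>a\<in>carrier R. \<forall>b\<in>carrier R.
        (\<forall>r\<in>carrier R. a \<otimes>\<^bsub>R\<^esub> r \<otimes>\<^bsub>R\<^esub> b \<in> P) \<longrightarrow> a \<in> P \<or> b \<in> P)"

definition normal_elem :: "('a, 'b) ring_scheme \<Rightarrow> 'a \<Rightarrow> bool" where
  "normal_elem R v \<longleftrightarrow> v \<in> carrier R \<and>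
     (\<lambda>r. v \<otimes>\<^bsub>R\<^esub> r) ` carrier R = (\<lambda>r. r \<otimes>\<^bsub>R\<^esub> v) ` carrier R"

definition prime_height :: "('a, 'b) ring_scheme \<Rightarrow> 'a set \<Rightarrow> enat" where
  "prime_height R P = Sup {enat n | n. \<exists>C :: nat \<Rightarrow> 'a set.
      (\<forall>i\<le>n. nc_prime_ideal R (C i)) \<and> (\<forall>i<n. C i \<subset> C (Suc i)) \<and> C n = P}"

definition noetherian_UFR :: "('a, 'b) ring_scheme \<Rightarrow> bool" where
  "noetherian_UFR R \<longleftrightarrow> nc_noetherian R \<and> nc_domain R \<and>
     (\<forall>P. nc_prime_ideal R P \<and> P \<noteq> {\<zero>\<^bsub>R\<^esub>} \<longrightarrow>
        (\<exists>v. normal_elem R v \<and> nc_prime_ideal R (genideal R {v}) \<and>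
             genideal R {v} \<noteq> {\<zero>\<^bsub>R\<^esub>} \<and> genideal R {v} \<subseteq> P))"

definition noetherian_UFD :: "('a, 'b) ring_scheme \<Rightarrow> bool" where
  "noetherian_UFD R \<longleftrightarrow> noetherian_UFR R \<and>
     (\<forall>P. nc_prime_ideal R P \<and> prime_height R P = 1 \<longrightarrow> nc_domain (R Quot P))"

end

theory Submission
  imports Defs "HOL-Computational_Algebra.Polynomial_Factorial"
begin

text \<open>
  Let \<open>f\<close> be a prime factor of \<open>x h\<^sup>p + 1\<close>. Then \<open>f\<close> does not divide \<open>h\<close>, and
  \<open>f' \<noteq> 0\<close> because \<open>(x h\<^sup>p + 1)' = h\<^sup>p\<close>. The polynomial \<open>z = f\<^sup>p\<close> has \<open>z' = 0\<close>, so it is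
  central in \<open>A\<^sub>h\<close> and \<open>Z = z A\<^sub>h\<close> is a two-sided ideal.

  \<open>Z\<close> is prime: for an ideal \<open>I \<supseteq> Z\<close>, the \<open>n\<close>-th coefficients of those elements of \<open>I\<close> whose
  higher coefficients lie in \<open>z F[x]\<close> form an ideal of \<open>F[x]\<close> stable under \<open>h d/dx\<close>
  (commutators with \<open>y\<close>). Below \<open>p\<close>, \<open>h d/dx\<close> lowers the \<open>f\<close>-adic valuation by one, so that
  ideal contains \<open>1\<close> as soon as it contains an element not divisible by \<open>z\<close>; a leading-term
  comparison modulo \<open>z\<close> then gives primality.

  \<open>Z\<close> has height one: in a UFR a nonzero prime strictly inside \<open>Z\<close> would contain a principal
  prime \<open>(v) \<subseteq> Z\<close>, and writing \<open>v = z r\<close>, primality of \<open>(v)\<close> forces \<open>z \<in> (v)\<close> or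
  \<open>v \<in> z\<^sup>k A\<^sub>h\<close> for all \<open>k\<close>. But \<open>f \<cdot> f\<^sup>p\<^sup>-\<^sup>1 \<in> Z\<close> with neither factor in \<open>Z\<close>, so \<open>A\<^sub>h/Z\<close> is not
  a domain. The ring axioms of \<open>A\<^sub>h\<close> are never proved: they are part of the UFD hypothesis.
\<close>

section \<open>Polynomials over a field\<close>

lemma poly_coprime_bezout:
  fixes a b :: "'a::field poly"
  assumes "coprime a b"
  shows "\<exists>s t. s * a + t * b = 1"
  using assms
proof (induction b arbitrary: a rule: measure_induct_rule[where f = "\<lambda>b. if b = 0 then 0 else Suc (degree b)"])
  case (less b)
  show ?case
  proof (cases "b = 0")
    case True
    with less.prems obtain e where "1 = a * e" by (auto elim: dvdE)
    then have "e * a + 0 * b = 1" by (simp add: mult.commute)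
    then show ?thesis by blast
  next
    case False
    have "coprime b (a mod b)"
      using less.prems by (auto intro!: coprimeI dest: coprime_common_divisor simp: dvd_mod_iff)
    moreover have "(if a mod b = 0 then 0 else Suc (degree (a mod b))) < Suc (degree b)"
      using False degree_mod_less[of b a] by auto
    ultimately obtain s t where "s * b + t * (a mod b) = 1"
      using less.IH False by fastforce
    moreover have "a mod b = a - (a div b) * b"
      by (simp add: minus_div_mult_eq_mod)
    ultimately have "t * a + (s - t * (a div b)) * b = 1"
      by (simp add: algebra_simps)
    then show ?thesis by blast
  qed
qed

lemma prime_elem_bezout_power:
  fixes f g :: "'a::field poly"
  assumes "prime_elem f" "\<not> f dvd g"
  shows "\<exists>s t. s * g + t * f ^ k = 1"
proof (induction k)
  case 0
  show ?case by (rule exI[of _ 0], rule exI[of _ 1]) simp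
next
  case (Suc k)
  then obtain u v where uv: "u * g + v * f ^ k = 1" by blast
  have "coprime f g"
    by (rule coprimeI) (use assms prime_elemD2 dvd_trans in blast)
  then obtain s t where st: "s * f + t * g = 1" using poly_coprime_bezout by blast
  have "1 = (u * g + v * f ^ k) * (s * f + t * g)" using uv st by simp
  also have "\<dots> = (u * s * f + u * t * g + v * f ^ k * t) * g + (v * s) * f ^ Suc k"
    by (simp add: algebra_simps)
  finally show ?case by metis
qed

lemma pderiv_nonzero_not_dvd:
  fixes f :: "'a::field poly"
  assumes "pderiv f \<noteq> 0"
  shows "\<not> f dvd pderiv f"
proof
  assume "f dvd pderiv f"
  then have "degree f \<le> degree (pderiv f)" using assms by (rule dvd_imp_degree_le)
  moreover have "degree (pderiv f) \<le> degree f - 1"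
    by (rule degree_le) (auto simp: coeff_pderiv coeff_eq_0)
  moreover have "degree f \<noteq> 0" using assms by (metis degree_eq_zeroE pderiv_singleton)
  ultimately show False by simp
qed

lemma pderiv_power_CHAR [simp]: "pderiv (f ^ CHAR('a)) = (0 :: 'a::field poly)"
  by (simp add: pderiv_power)

lemma prime_elem_degree_pos: "prime_elem (f :: 'a::field poly) \<Longrightarrow> degree f > 0"
  using is_unit_iff_degree[of f] by (auto simp: prime_elem_def)

lemma exists_prime_factor_poly:
  fixes g :: "'a::field poly"
  assumes "degree g > 0"
  obtains f where "prime_elem f" "f dvd g"
proof -
  have "g \<noteq> 0" using assms by auto
  obtain P where P: "prod_mset P = smult (inverse (lead_coeff g)) g" "\<forall>q\<in>#P. prime_elem q"
    using field_poly_prod_mset_prime_factorization[OF \<open>g \<noteq> 0\<close>]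
      field_poly_in_prime_factorization_imp_prime by blast
  have "P \<noteq> {#}"
  proof
    assume "P = {#}"
    then have "degree (smult (inverse (lead_coeff g)) g) = 0" using P(1) by (metis degree_1 prod_mset_empty)
    then show False using assms \<open>g \<noteq> 0\<close> by simp
  qed
  then obtain f where f: "f \<in># P" by blast
  have "f dvd smult (inverse (lead_coeff g)) g" using P(1) f by (metis dvd_prod_mset)
  then have "f dvd g" using \<open>g \<noteq> 0\<close> by (simp add: dvd_smult_cancel)
  then show ?thesis using that P(2) f by blast
qed

lemma exists_separable_prime_not_dvd:
  fixes h :: "'a::field poly"
  assumes "CHAR('a) > 0" "h \<noteq> 0"
  shows "\<exists>f. prime_elem f \<and> pderiv f \<noteq> 0 \<and> \<not> f dvd h"
proof -
  define g where "g = [:0, 1:] * h ^ CHAR('a) + 1"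
  have "degree ([:0, 1:] * h ^ CHAR('a)) = Suc (CHAR('a) * degree h)"
    using assms(2) by (simp add: degree_mult_eq degree_power_eq)
  then have "degree g > 0" unfolding g_def by (subst degree_add_eq_left) auto
  then obtain f where "prime_elem f" "f dvd g" by (rule exists_prime_factor_poly)
  have f_not_dvd_h: "\<not> f dvd h"
  proof
    assume "f dvd h"
    then have "f dvd h ^ CHAR('a)" using assms(1) by (metis dvd_power dvd_trans)
    then have "f dvd [:0, 1:] * h ^ CHAR('a)" by (rule dvd_mult)
    then have "f dvd 1" using \<open>f dvd g\<close> unfolding g_def by (simp add: dvd_add_right_iff)
    then show False using \<open>prime_elem f\<close> by (simp add: prime_elem_def)
  qed
  moreover have "pderiv f \<noteq> 0"
  proof
    assume "pderiv f = 0"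
    obtain q where "g = f * q" using \<open>f dvd g\<close> by (auto elim: dvdE)
    then have "pderiv g = f * pderiv q" by (simp add: pderiv_mult \<open>pderiv f = 0\<close>)
    moreover have "pderiv g = h ^ CHAR('a)" unfolding g_def by (simp add: pderiv_add pderiv_pCons)
    ultimately have "f dvd h ^ CHAR('a)" by (metis dvd_triv_left)
    then show False using prime_elem_dvd_power[OF \<open>prime_elem f\<close>] f_not_dvd_h by blast
  qed
  ultimately show ?thesis using \<open>prime_elem f\<close> by blast
qed

lemma pderiv_lowers_multiplicity:
  fixes f h u :: "'a::field poly"
  assumes f: "prime_elem f" "pderiv f \<noteq> 0" "\<not> f dvd h"
    and k: "of_nat (Suc k) \<noteq> (0::'a)"
    and u: "f ^ Suc k dvd u" "\<not> f ^ Suc (Suc k) dvd u"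
  shows "\<not> f ^ Suc k dvd h * pderiv u"
proof
  assume dvd: "f ^ Suc k dvd h * pderiv u"
  obtain w where w: "u = f ^ Suc k * w" using u(1) by (auto elim: dvdE)
  have "\<not> f dvd w" using u(2) unfolding w by (auto simp: power_Suc2 mult_dvd_mono)
  define m where "m = h * (f * pderiv w + smult (of_nat (Suc k)) (w * pderiv f))"
  have "h * pderiv u = f ^ k * m"
    unfolding w m_def pderiv_mult pderiv_power_Suc by (simp add: algebra_simps)
  with dvd have "f ^ k * f dvd f ^ k * m" by (simp add: power_Suc2)
  then have "f dvd m" using f(1) by (simp add: prime_elem_def)
  then have "f dvd smult (of_nat (Suc k)) (w * pderiv f)"
    unfolding m_def using f(3) by (simp add: prime_elem_dvd_mult_iff[OF f(1)] dvd_add_right_iff)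
  then have "f dvd w * pderiv f" using k by (simp add: dvd_smult_cancel)
  then show False
    using \<open>\<not> f dvd w\<close> pderiv_nonzero_not_dvd[OF f(2)] by (simp add: prime_elem_dvd_mult_iff[OF f(1)])
qed

lemma derivation_stable_ideal_contains_one:
  fixes f h :: "'a::field poly" and J :: "'a poly set"
  assumes f: "prime_elem f" "pderiv f \<noteq> 0" "\<not> f dvd h"
    and add: "\<And>u v. u \<in> J \<Longrightarrow> v \<in> J \<Longrightarrow> u + v \<in> J"
    and mult: "\<And>g u. u \<in> J \<Longrightarrow> g * u \<in> J"
    and deriv: "\<And>u. u \<in> J \<Longrightarrow> h * pderiv u \<in> J"
    and z: "f ^ CHAR('a) \<in> J" and u: "u \<in> J" "\<not> f ^ CHAR('a) dvd u"
  shows "1 \<in> J"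
proof -
  have "\<exists>g\<in>J. \<not> f dvd g" if "Suc k \<le> CHAR('a)" "v \<in> J" "\<not> f ^ Suc k dvd v" for k v
    using that
  proof (induction k arbitrary: v)
    case 0
    then show ?case by auto
  next
    case (Suc k)
    show ?case
    proof (cases "f ^ Suc k dvd v")
      case True
      have "of_nat (Suc k) \<noteq> (0::'a)"
        unfolding of_nat_eq_0_iff_char_dvd using Suc.prems(1) by (auto dest: dvd_imp_le)
      then have "\<not> f ^ Suc k dvd h * pderiv v"
        using pderiv_lowers_multiplicity[OF f] True Suc.prems(3) by blast
      then show ?thesis using Suc.IH[of "h * pderiv v"] Suc.prems(1,2) deriv by simp
    next
      case False
      then show ?thesis using Suc.IH Suc.prems(1,2) by simp
    qed
  qed
  moreover have "CHAR('a) = Suc (CHAR('a) - 1)"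
    using u(2) by (cases "CHAR('a)") auto
  ultimately obtain g where "g \<in> J" "\<not> f dvd g" using u by (metis le_refl)
  then obtain s t where "s * g + t * f ^ CHAR('a) = 1"
    using prime_elem_bezout_power[OF f(1)] by blast
  moreover have "s * g + t * f ^ CHAR('a) \<in> J" using add mult \<open>g \<in> J\<close> z by blast
  ultimately show ?thesis by simp
qed

section \<open>Prime ideals and height in noncommutative rings\<close>

lemma ideal_zero_closed: "ideal I R \<Longrightarrow> \<zero>\<^bsub>R\<^esub> \<in> I"
  by (rule additive_subgroup.zero_closed[OF ideal.axioms(1)])

lemma (in ring) sandwich_ideal:
  assumes "ideal P R" "b \<in> carrier R"
  shows "ideal {c \<in> carrier R. \<forall>r\<in>carrier R. c \<otimes> r \<otimes> b \<in> P} R"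
    (is "ideal ?I R")
proof (rule idealI)
  interpret P: ideal P R by fact
  show "ring R" ..
  show "subgroup ?I (add_monoid R)"
  proof (rule add.subgroupI)
    show "?I \<noteq> {}" using assms by (auto intro!: exI[of _ \<zero>])
  qed (use assms in \<open>auto simp: l_distr l_minus\<close>)
  show "x \<otimes> a \<in> ?I" if a: "a \<in> ?I" and x: "x \<in> carrier R" for a x
  proof -
    have "x \<otimes> a \<otimes> r \<otimes> b = x \<otimes> (a \<otimes> r \<otimes> b)" if "r \<in> carrier R" for r
      using that a x assms(2) by (simp add: m_assoc)
    then show ?thesis using a x by (auto intro: P.I_l_closed)
  qed
  show "a \<otimes> x \<in> ?I" if "a \<in> ?I" "x \<in> carrier R" for a x
    using that by (simp add: m_assoc)
qed

lemma nc_domain_zero_prime: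
  fixes R (structure)
  assumes "nc_domain R"
  shows "nc_prime_ideal R {\<zero>}"
proof -
  interpret ring R using assms by (simp add: nc_domain_def)
  show ?thesis unfolding nc_prime_ideal_def
  proof (intro conjI ballI impI)
    show "ideal {\<zero>} R" by (rule zeroideal)
    show "{\<zero>} \<noteq> carrier R" using assms one_closed by (auto simp: nc_domain_def)
    fix a b assume ab: "a \<in> carrier R" "b \<in> carrier R" "\<forall>r\<in>carrier R. a \<otimes> r \<otimes> b \<in> {\<zero>}"
    then have "a \<otimes> \<one> \<otimes> b \<in> {\<zero>}" by blast
    then have "a \<otimes> b = \<zero>" using ab(1) by simp
    then show "a \<in> {\<zero>} \<or> b \<in> {\<zero>}" using assms ab(1,2) by (simp add: nc_domain_def)
  qed
qed

lemma nc_domain_Quot_mult_mem: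
  fixes R (structure)
  assumes "nc_domain (R Quot P)" "ideal P R" "a \<in> carrier R" "b \<in> carrier R" "a \<otimes> b \<in> P"
  shows "a \<in> P \<or> b \<in> P"
proof -
  interpret ring R using assms(2) by (rule ideal.axioms(2))
  have "(P +> a) \<otimes>\<^bsub>R Quot P\<^esub> (P +> b) = \<zero>\<^bsub>R Quot P\<^esub>"
    using ideal.rcoset_mult_add[OF assms(2-4)] a_rcos_zero[OF assms(2,5)] by (simp add: FactRing_def)
  moreover have "P +> a \<in> carrier (R Quot P)" "P +> b \<in> carrier (R Quot P)"
    using a_rcosetsI[of P] ideal.Icarr[OF assms(2)] assms(3,4) by (auto simp: FactRing_def)
  ultimately have "P +> a = P \<or> P +> b = P"
    using assms(1) by (auto simp: nc_domain_def FactRing_def)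
  then show ?thesis using ideal.rcos_const_imp_mem[OF assms(2)] assms(3,4) by blast
qed

lemma prime_height_eq_oneI:
  fixes R (structure)
  assumes "nc_prime_ideal R {\<zero>}" "nc_prime_ideal R P" "P \<noteq> {\<zero>}"
    and no_middle: "\<And>Q. nc_prime_ideal R Q \<Longrightarrow> Q \<subset> P \<Longrightarrow> Q = {\<zero>}"
  shows "prime_height R P = 1"
proof -
  let ?chains = "{enat n | n. \<exists>C :: nat \<Rightarrow> _ set.
      (\<forall>i\<le>n. nc_prime_ideal R (C i)) \<and> (\<forall>i<n. C i \<subset> C (Suc i)) \<and> C n = P}"
  have "Sup ?chains \<le> 1"
  proof (rule Sup_least)
    fix x assume "x \<in> ?chains"
    then obtain n C where x: "x = enat n" and C: "\<forall>i\<le>n. nc_prime_ideal R (C i)"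
      "\<forall>i<n. C i \<subset> C (Suc i)" "C n = P" by blast
    have "n \<le> 1"
    proof (rule ccontr)
      assume "\<not> n \<le> 1"
      then obtain k where n: "n = Suc (Suc k)" by (metis One_nat_def Suc_le_mono le0 not0_implies_Suc)
      have "C (Suc k) \<subset> P" using C(2) C(3) unfolding n by (simp add: All_less_Suc)
      moreover have "nc_prime_ideal R (C (Suc k))" using C(1) unfolding n by simp
      ultimately have "C (Suc k) = {\<zero>}" by (rule no_middle[rotated])
      moreover have "\<zero> \<in> C k"
        using C(1) unfolding n by (simp add: nc_prime_ideal_def ideal_zero_closed)
      moreover have "C k \<subset> C (Suc k)" using C(2) unfolding n by (simp add: All_less_Suc)
      ultimately show False by auto
    qed
    then show "x \<le> 1" using x by (simp add: one_enat_def)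
  qed
  moreover have "enat 1 \<in> ?chains"
  proof -
    define C where "C i = (if i = 0 then {\<zero>} else P)" for i :: nat
    have "\<zero> \<in> P" using assms(2) by (simp add: nc_prime_ideal_def ideal_zero_closed)
    then have "(\<forall>i\<le>1. nc_prime_ideal R (C i)) \<and> (\<forall>i<1. C i \<subset> C (Suc i)) \<and> C 1 = P"
      using assms(1-3) by (auto simp: C_def le_Suc_eq)
    then show ?thesis by blast
  qed
  then have "1 \<le> Sup ?chains" unfolding one_enat_def by (rule Sup_upper)
  ultimately show ?thesis unfolding prime_height_def by (rule antisym)
qed

section \<open>Computing in \<open>A\<^sub>h\<close>\<close>

lemma A_alg_simps [simp]:
  "carrier (A_alg h) = UNIV" "monoid.mult (A_alg h) = A_mult h"
  "one (A_alg h) = 1" "zero (A_alg h) = 0" "add (A_alg h) = (+)"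
  by (simp_all add: A_alg_def)

lemma A_delta_0 [simp]: "A_delta h 0 = 0"
  by (simp add: A_delta_def)

lemma coeff_A_ymul:
  "coeff (A_ymul h q) k = (if k = 0 then 0 else coeff q (k - 1)) + A_delta h (coeff q k)"
  by (cases k) (simp_all add: A_ymul_def coeff_map_poly)

lemma A_mult_const_left: "A_mult h [:g:] q = smult g q"
  by (simp add: A_mult_def)

lemma A_mult_y_left: "A_mult h [:0, 1:] q = A_ymul h q"
  by (simp add: A_mult_def atMost_Suc)

lemma A_ymul_power_monom: "(A_ymul h ^^ i) (monom 1 k) = monom 1 (i + k)"
proof (induction i)
  case (Suc i)
  have "A_ymul h (monom 1 m) = monom 1 (Suc m)" for m
    by (rule poly_eqI) (auto simp: coeff_A_ymul coeff_monom A_delta_def)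
  then show ?case using Suc by simp
qed simp

lemma A_mult_y_right: "A_mult h c [:0, 1:] = pCons 0 c"
proof -
  have "A_mult h c [:0, 1:] = (\<Sum>i\<le>degree c. smult (coeff c i) (monom 1 (Suc i)))"
  proof -
    have "[:0, 1:] = (monom 1 1 :: 'a poly poly)" by (simp add: monom_Suc)
    then show ?thesis unfolding A_mult_def by (simp add: A_ymul_power_monom)
  qed
  also have "\<dots> = (\<Sum>i\<le>degree c. pCons 0 (monom (coeff c i) i))"
    by (simp add: smult_monom monom_Suc)
  also have "\<dots> = pCons 0 (\<Sum>i\<le>degree c. monom (coeff c i) i)"
    by (rule poly_eqI) (simp add: coeff_sum coeff_pCons split: nat.split)
  also have "\<dots> = pCons 0 c" by (simp add: poly_as_sum_of_monoms)
  finally show ?thesis .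
qed

lemma A_commutator_y:
  "A_mult h [:0, 1:] c - A_mult h c [:0, 1:] = map_poly (A_delta h) c"
  by (simp add: A_mult_y_left A_mult_y_right A_ymul_def)

lemma A_mult_smult_left: "A_mult h (smult c r) q = smult c (A_mult h r q)"
proof -
  have "A_mult h (smult c r) q = (\<Sum>i\<le>degree r. smult (coeff (smult c r) i) ((A_ymul h ^^ i) q))"
    unfolding A_mult_def
    by (rule sum.mono_neutral_left) (auto simp: coeff_eq_0 degree_smult_le le_trans)
  also have "\<dots> = smult c (A_mult h r q)"
    unfolding A_mult_def by (rule poly_eqI) (simp add: coeff_sum sum_distrib_left mult.assoc)
  finally show ?thesis .
qed

lemma A_mult_smult_right:
  assumes "pderiv c = 0"
  shows "A_mult h r (smult c q) = smult c (A_mult h r q)"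
proof -
  have "A_ymul h (smult c s) = smult c (A_ymul h s)" for s
    by (rule poly_eqI) (simp add: coeff_A_ymul A_delta_def pderiv_mult assms algebra_simps)
  then have "(A_ymul h ^^ i) (smult c q) = smult c ((A_ymul h ^^ i) q)" for i
    by (induction i) simp_all
  then show ?thesis
    unfolding A_mult_def by (intro poly_eqI) (simp add: coeff_sum sum_distrib_left algebra_simps)
qed

lemma coeff_A_ymul_power:
  "coeff ((A_ymul h ^^ i) q) (degree q + i) = lead_coeff q"
  "k > degree q + i \<Longrightarrow> coeff ((A_ymul h ^^ i) q) k = 0"
proof (induction i arbitrary: k)
  case 0
  { case 1 show ?case by simp }
  { case 2 then show ?case by (simp add: coeff_eq_0) }
next
  case (Suc i)
  { case 1 show ?case using Suc.IH by (simp add: coeff_A_ymul) }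
  { case 2 then show ?case using Suc.IH(2)[of k] Suc.IH(2)[of "k - 1"] by (simp add: coeff_A_ymul) }
qed

lemma A_mult_lead_coeff:
  "coeff (A_mult h p q) (degree p + degree q) = lead_coeff p * lead_coeff q"
proof -
  have "coeff (A_mult h p q) (degree p + degree q) =
      (\<Sum>i\<le>degree p. coeff p i * coeff ((A_ymul h ^^ i) q) (degree p + degree q))"
    unfolding A_mult_def by (simp add: coeff_sum)
  also have "\<dots> = (\<Sum>i\<in>{degree p}. coeff p i * coeff ((A_ymul h ^^ i) q) (degree p + degree q))"
    by (rule sum.mono_neutral_right) (auto simp: coeff_A_ymul_power(2))
  finally show ?thesis by (simp add: add.commute[of "degree p"] coeff_A_ymul_power(1))
qed

section \<open>The ideal \<open>f\<^sup>p A\<^sub>h\<close>\<close>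

text \<open>\<open>A_multiples c = [:c:] A\<^sub>h\<close>; when \<open>c' = 0\<close>, \<open>c\<close> commutes with \<open>y\<close> and this is the
  two-sided ideal generated by \<open>c\<close>.\<close>

definition A_multiples :: "'a::field poly \<Rightarrow> 'a poly poly set" where
  "A_multiples c = range (smult c)"

lemma mem_A_multiples_iff: "q \<in> A_multiples c \<longleftrightarrow> (\<forall>i. c dvd coeff q i)"
proof
  assume "\<forall>i. c dvd coeff q i"
  then have "q = smult c (map_poly (\<lambda>a. a div c) q)"
    by (intro poly_eqI) (simp add: coeff_map_poly)
  then show "q \<in> A_multiples c" unfolding A_multiples_def by (rule image_eqI) simp
qed (auto simp: A_multiples_def)

lemma smult_mem_A_multiples_mult:
  "r \<in> A_multiples d \<Longrightarrow> smult c r \<in> A_multiples (c * d)"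
  by (auto simp: A_multiples_def)

lemma A_ideal_mult_closed:
  assumes "ideal I (A_alg h)" "a \<in> I"
  shows "A_mult h x a \<in> I" "A_mult h a x \<in> I"
  using ideal.I_l_closed[OF assms] ideal.I_r_closed[OF assms] by simp_all

lemma A_ideal_add_closed: "ideal I (A_alg h) \<Longrightarrow> a \<in> I \<Longrightarrow> b \<in> I \<Longrightarrow> a + b \<in> I"
  using additive_subgroup.a_closed[OF ideal.axioms(1)] by fastforce

lemma A_multiples_subset:
  assumes "ideal W (A_alg h)" "[:c:] \<in> W"
  shows "A_multiples c \<subseteq> W"
proof
  fix q assume "q \<in> A_multiples c"
  then obtain r where "q = A_mult h [:c:] r" by (auto simp: A_multiples_def A_mult_const_left)
  then show "q \<in> W" using A_ideal_mult_closed(2)[OF assms] by simp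
qed

lemma poly_cutoff_diff_mem_A_multiples:
  "\<forall>i>n. c dvd coeff q i \<Longrightarrow> q - poly_cutoff (Suc n) q \<in> A_multiples c"
  by (simp add: mem_A_multiples_iff coeff_poly_cutoff)

lemma degree_poly_cutoff_Suc: "coeff q n \<noteq> 0 \<Longrightarrow> degree (poly_cutoff (Suc n) q) = n"
  by (intro antisym degree_le le_degree) (simp_all add: coeff_poly_cutoff)

lemma exists_last_coeff_not_dvd:
  assumes "q \<notin> A_multiples c"
  obtains n where "\<not> c dvd coeff q n" "\<forall>i>n. c dvd coeff q i"
proof -
  let ?S = "{i. \<not> c dvd coeff q i}"
  have "?S \<subseteq> {..degree q}" by (auto intro: le_degree)
  then have "finite ?S" by (rule finite_subset) simp
  moreover have "?S \<noteq> {}" using assms by (simp add: mem_A_multiples_iff)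
  ultimately show ?thesis using Max_in[of ?S] Max_ge[of ?S] that by (metis leD mem_Collect_eq)
qed

lemma A_multiples_powers_eq_zero:
  assumes "degree c > 0" "\<And>k. v \<in> A_multiples (c ^ Suc k)"
  shows "v = 0"
proof (rule poly_eqI)
  fix i
  define d where "d = degree (coeff v i)"
  have "degree (c ^ Suc d) = degree c + d * degree c"
    using assms(1) by (cases "c = 0") (auto simp: degree_mult_eq degree_power_eq)
  moreover have "d \<le> d * degree c" using assms(1) by simp
  ultimately have "d < degree (c ^ Suc d)" using assms(1) by linarith
  moreover have "c ^ Suc d dvd coeff v i" using assms(2)[of d] unfolding mem_A_multiples_iff ..
  ultimately show "coeff v i = coeff 0 i"
    unfolding d_def by (metis coeff_0 dvd_imp_degree_le not_le)
qed

lemma const_power_mem_A_multiples_power_le: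
  assumes "prime_elem f" "[:f ^ k:] \<in> A_multiples (f ^ n)"
  shows "n \<le> k"
proof -
  have "f ^ n dvd f ^ k" using assms(2) unfolding mem_A_multiples_iff by (metis coeff_pCons_0)
  then have "degree (f ^ n) \<le> degree (f ^ k)"
    using assms(1) by (intro dvd_imp_degree_le) (auto simp: prime_elem_def)
  then have "n * degree f \<le> k * degree f"
    using assms(1) by (simp add: degree_power_eq prime_elem_def)
  then show ?thesis using prime_elem_degree_pos[OF assms(1)] by simp
qed

context
  fixes h :: "'a::field poly"
  assumes ring: "ring (A_alg h)"
begin

lemma A_a_inv [simp]: "\<ominus>\<^bsub>A_alg h\<^esub> a = - a"
proof -
  interpret ring "A_alg h" by (rule ring)
  show ?thesis by (rule add.inv_equality) simp_all
qed

lemma A_ideal_diff_closed: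
  assumes "ideal I (A_alg h)" "a \<in> I" "b \<in> I"
  shows "a - b \<in> I"
proof -
  interpret additive_subgroup I "A_alg h" using assms(1) by (rule ideal.axioms(1))
  have "a \<oplus>\<^bsub>A_alg h\<^esub> \<ominus>\<^bsub>A_alg h\<^esub> b \<in> I" using assms(2,3) by (intro a_closed a_inv_closed)
  then show ?thesis by simp
qed

lemma A_mult_add_left: "A_mult h (a + b) c = A_mult h a c + A_mult h b c"
proof -
  interpret ring "A_alg h" by (rule ring)
  show ?thesis using l_distr[of a b c] by simp
qed

lemma A_mult_add_right: "A_mult h c (a + b) = A_mult h c a + A_mult h c b"
proof -
  interpret ring "A_alg h" by (rule ring)
  show ?thesis using r_distr[of a b c] by simp
qed

lemma A_mult_1_right [simp]: "A_mult h a 1 = a"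
proof -
  interpret ring "A_alg h" by (rule ring)
  show ?thesis using r_one[of a] by simp
qed

lemma A_ideal_map_poly_A_delta_closed:
  assumes "ideal I (A_alg h)" "c \<in> I"
  shows "map_poly (A_delta h) c \<in> I"
  unfolding A_commutator_y[symmetric]
  by (intro A_ideal_diff_closed[OF assms(1)] A_ideal_mult_closed[OF assms])

lemma A_multiples_ideal:
  assumes "pderiv c = 0"
  shows "ideal (A_multiples c) (A_alg h)"
proof -
  interpret ring "A_alg h" by (rule ring)
  show ?thesis
  proof (rule idealI)
    show "ring (A_alg h)" by (rule ring)
    show "subgroup (A_multiples c) (add_monoid (A_alg h))"
    proof (rule add.subgroupI)
      show "A_multiples c \<noteq> {}" by (simp add: A_multiples_def)
    qed (auto simp: mem_A_multiples_iff)
  qed (auto simp: A_multiples_def A_mult_smult_left A_mult_smult_right[OF assms])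
qed

lemma A_mult_notin_A_multiples:
  assumes "pderiv z = 0"
    and a: "coeff a n = 1" "\<forall>i>n. z dvd coeff a i"
    and b: "\<not> z dvd coeff b m" "\<forall>i>m. z dvd coeff b i"
  shows "A_mult h a b \<notin> A_multiples z"
proof
  assume ab: "A_mult h a b \<in> A_multiples z"
  txt \<open>Modulo \<open>z\<close>, \<open>a b\<close> agrees with the product of the truncations \<open>a\<^sub>0, b\<^sub>0\<close> of degrees
    \<open>n, m\<close>, whose top coefficient is \<open>1 \<cdot> coeff b m\<close>.\<close>
  have Z: "ideal (A_multiples z) (A_alg h)" by (rule A_multiples_ideal[OF assms(1)])
  define a0 where "a0 = poly_cutoff (Suc n) a"
  define b0 where "b0 = poly_cutoff (Suc m) b"
  have "a - a0 \<in> A_multiples z" "b - b0 \<in> A_multiples z"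
    using a(2) b(2) unfolding a0_def b0_def by (simp_all add: poly_cutoff_diff_mem_A_multiples)
  then have rest: "A_mult h a0 (b - b0) + A_mult h (a - a0) b \<in> A_multiples z"
    by (intro A_ideal_add_closed[OF Z] A_ideal_mult_closed[OF Z])
  have "A_mult h a b = A_mult h a0 b + A_mult h (a - a0) b"
    using A_mult_add_left[of a0 "a - a0" b] by simp
  moreover have "A_mult h a0 b = A_mult h a0 b0 + A_mult h a0 (b - b0)"
    using A_mult_add_right[of a0 b0 "b - b0"] by simp
  ultimately have "A_mult h a0 b0 = A_mult h a b - (A_mult h a0 (b - b0) + A_mult h (a - a0) b)"
    by (simp add: algebra_simps)
  then have "A_mult h a0 b0 \<in> A_multiples z"
    using A_ideal_diff_closed[OF Z ab rest] by simp
  then have "z dvd coeff (A_mult h a0 b0) (degree a0 + degree b0)"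
    by (simp add: mem_A_multiples_iff)
  moreover have "coeff b m \<noteq> 0" using b(1) by auto
  then have "coeff (A_mult h a0 b0) (degree a0 + degree b0) = coeff b m"
    using a(1) unfolding A_mult_lead_coeff a0_def b0_def
    by (simp add: degree_poly_cutoff_Suc coeff_poly_cutoff)
  ultimately show False using b(1) by simp
qed

lemma ideal_contains_normalized_element:
  assumes f: "prime_elem f" "pderiv f \<noteq> 0" "\<not> f dvd h"
    and I: "ideal I (A_alg h)" "A_multiples (f ^ CHAR('a)) \<subseteq> I"
    and a: "a \<in> I" "\<not> f ^ CHAR('a) dvd coeff a n" "\<forall>i>n. f ^ CHAR('a) dvd coeff a i"
  obtains c where "c \<in> I" "coeff c n = 1" "\<forall>i>n. f ^ CHAR('a) dvd coeff c i"
proof -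
  define K where "K = {c \<in> I. \<forall>i>n. f ^ CHAR('a) dvd coeff c i}"
  txt \<open>The \<open>n\<close>-th coefficients of \<open>K\<close> form an ideal of \<open>F[x]\<close> stable under \<open>h d/dx\<close>.\<close>
  have "1 \<in> (\<lambda>c. coeff c n) ` K"
  proof (rule derivation_stable_ideal_contains_one[OF f])
    fix u v assume "u \<in> (\<lambda>c. coeff c n) ` K" "v \<in> (\<lambda>c. coeff c n) ` K"
    then obtain c d where "c \<in> K" "d \<in> K" "u = coeff c n" "v = coeff d n" by blast
    then show "u + v \<in> (\<lambda>c. coeff c n) ` K"
      by (intro image_eqI[of _ _ "c + d"]) (auto simp: K_def intro: A_ideal_add_closed[OF I(1)])
  next
    fix g u assume "u \<in> (\<lambda>c. coeff c n) ` K"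
    then obtain c where "c \<in> K" "u = coeff c n" by blast
    moreover have "smult g c \<in> I"
      using A_ideal_mult_closed(1)[OF I(1), of c "[:g:]"] \<open>c \<in> K\<close> by (simp add: K_def A_mult_const_left)
    ultimately show "g * u \<in> (\<lambda>c. coeff c n) ` K"
      by (intro image_eqI[of _ _ "smult g c"]) (auto simp: K_def)
  next
    fix u assume "u \<in> (\<lambda>c. coeff c n) ` K"
    then obtain c where c: "c \<in> K" "u = coeff c n" by blast
    define d where "d = map_poly (A_delta h) c"
    have coeff_d: "coeff d i = h * pderiv (coeff c i)" for i
      unfolding d_def by (simp add: coeff_map_poly A_delta_def)
    have "d \<in> I"
      unfolding d_def using c(1) by (simp add: K_def A_ideal_map_poly_A_delta_closed[OF I(1)])
    moreover have "f ^ CHAR('a) dvd coeff d i" if "i > n" for i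
    proof -
      have "f ^ CHAR('a) dvd coeff c i" using c(1) that by (simp add: K_def)
      then obtain e where "coeff c i = f ^ CHAR('a) * e" by (rule dvdE)
      then show ?thesis by (simp add: coeff_d pderiv_mult)
    qed
    ultimately show "h * pderiv u \<in> (\<lambda>c. coeff c n) ` K"
      using c(2) coeff_d by (intro image_eqI[of _ _ d]) (auto simp: K_def)
  next
    have "monom (f ^ CHAR('a)) n \<in> A_multiples (f ^ CHAR('a))"
      by (simp add: mem_A_multiples_iff coeff_monom)
    then show "f ^ CHAR('a) \<in> (\<lambda>c. coeff c n) ` K"
      using I(2) by (intro image_eqI[of _ _ "monom (f ^ CHAR('a)) n"]) (auto simp: K_def coeff_monom)
  next
    show "coeff a n \<in> (\<lambda>c. coeff c n) ` K" using a(1,3) by (auto simp: K_def)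
  qed (use a(2) in simp)
  then show ?thesis using that by (auto simp: K_def)
qed

lemma A_multiples_prime:
  assumes f: "prime_elem f" "pderiv f \<noteq> 0" "\<not> f dvd h" and char: "CHAR('a) > 0"
  shows "nc_prime_ideal (A_alg h) (A_multiples (f ^ CHAR('a)))"
proof -
  interpret ring "A_alg h" by (rule ring)
  let ?Z = "A_multiples (f ^ CHAR('a))"
  have Z: "ideal ?Z (A_alg h)" by (rule A_multiples_ideal) simp
  have "\<not> f ^ CHAR('a) dvd 1" using f(1) char by (simp add: is_unit_power_iff prime_elem_not_unit)
  then have "1 \<notin> ?Z" by (auto simp: mem_A_multiples_iff dest: spec[of _ 0])
  then have "?Z \<noteq> carrier (A_alg h)" by auto
  moreover have "a \<in> ?Z \<or> b \<in> ?Z" if ab: "\<forall>r. A_mult h (A_mult h a r) b \<in> ?Z" for a b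
  proof (rule ccontr)
    assume "\<not> (a \<in> ?Z \<or> b \<in> ?Z)"
    then have "a \<notin> ?Z" "b \<notin> ?Z" by auto
    let ?I = "{c \<in> carrier (A_alg h). \<forall>r\<in>carrier (A_alg h). c \<otimes>\<^bsub>A_alg h\<^esub> r \<otimes>\<^bsub>A_alg h\<^esub> b \<in> ?Z}"
    have I: "ideal ?I (A_alg h)" by (rule sandwich_ideal[OF Z]) simp
    have "?Z \<subseteq> ?I" using Z by (auto intro: A_ideal_mult_closed)
    obtain n where n: "\<not> f ^ CHAR('a) dvd coeff a n" "\<forall>i>n. f ^ CHAR('a) dvd coeff a i"
      using exists_last_coeff_not_dvd[OF \<open>a \<notin> ?Z\<close>] .
    obtain c where c: "c \<in> ?I" "coeff c n = 1" "\<forall>i>n. f ^ CHAR('a) dvd coeff c i"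
      using ideal_contains_normalized_element[OF f I \<open>?Z \<subseteq> ?I\<close> _ n] ab by auto
    obtain m where m: "\<not> f ^ CHAR('a) dvd coeff b m" "\<forall>i>m. f ^ CHAR('a) dvd coeff b i"
      using exists_last_coeff_not_dvd[OF \<open>b \<notin> ?Z\<close>] .
    have "A_mult h c b \<notin> ?Z" by (rule A_mult_notin_A_multiples[OF pderiv_power_CHAR c(2,3) m])
    moreover have "\<forall>r. A_mult h (A_mult h c r) b \<in> ?Z" using c(1) by simp
    then have "A_mult h c b \<in> ?Z" by (metis A_mult_1_right)
    ultimately show False by contradiction
  qed
  ultimately show ?thesis using Z by (simp add: nc_prime_ideal_def)
qed

lemma A_multiples_subset_principal_prime:
  assumes "pderiv z = 0" "degree z > 0" "v \<in> A_multiples z" "v \<noteq> 0"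
    and W: "nc_prime_ideal (A_alg h) (Idl\<^bsub>A_alg h\<^esub> {v})"
  shows "A_multiples z \<subseteq> Idl\<^bsub>A_alg h\<^esub> {v}"
proof -
  interpret ring "A_alg h" by (rule ring)
  let ?W = "Idl\<^bsub>A_alg h\<^esub> {v}"
  have W_ideal: "ideal ?W (A_alg h)" using W by (simp add: nc_prime_ideal_def)
  have v_mem: "v \<in> ?W" by (rule genideal_self') simp
  obtain r where v: "v = smult z r" using assms(3) by (auto simp: A_multiples_def)
  have "A_mult h (A_mult h [:z:] s) r \<in> ?W" for s
  proof -
    have "A_mult h (A_mult h [:z:] s) r = A_mult h s v"
      unfolding v A_mult_const_left A_mult_smult_left A_mult_smult_right[OF assms(1)] ..
    then show ?thesis using A_ideal_mult_closed(1)[OF W_ideal v_mem] by simp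
  qed
  then have "[:z:] \<in> ?W \<or> r \<in> ?W" using W by (simp add: nc_prime_ideal_def)
  txt \<open>If \<open>r \<in> (z r)\<close>, then \<open>v\<close> is divisible by every power of \<open>z\<close>.\<close>
  moreover have "r \<notin> ?W"
  proof
    assume "r \<in> ?W"
    have "v \<in> A_multiples (z ^ Suc k)" for k
    proof (induction k)
      case 0
      then show ?case using assms(3) by simp
    next
      case (Suc k)
      have "pderiv (z ^ Suc k) = 0" by (simp only: pderiv_power_Suc assms(1)) simp
      then have "?W \<subseteq> A_multiples (z ^ Suc k)"
        using Suc by (intro genideal_minimal A_multiples_ideal) auto
      then have "r \<in> A_multiples (z ^ Suc k)" using \<open>r \<in> ?W\<close> by blast
      then have "smult z r \<in> A_multiples (z * z ^ Suc k)" by (rule smult_mem_A_multiples_mult)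
      then show ?case by (simp add: v)
    qed
    then have "v = 0" by (rule A_multiples_powers_eq_zero[OF assms(2)])
    with assms(4) show False by contradiction
  qed
  ultimately show ?thesis using A_multiples_subset[OF W_ideal] by blast
qed

end

lemma prime_height_A_multiples:
  fixes h :: "'a::field poly"
  assumes UFR: "noetherian_UFR (A_alg h)"
    and f: "prime_elem f" "pderiv f \<noteq> 0" "\<not> f dvd h" and char: "CHAR('a) > 0"
  shows "prime_height (A_alg h) (A_multiples (f ^ CHAR('a))) = 1"
proof -
  let ?Z = "A_multiples (f ^ CHAR('a))"
  have dom: "nc_domain (A_alg h)" using UFR by (simp add: noetherian_UFR_def)
  then have ring: "ring (A_alg h)" by (simp add: nc_domain_def)
  have deg: "degree (f ^ CHAR('a)) > 0"
    using f(1) char by (simp add: degree_power_eq prime_elem_degree_pos prime_elem_def)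
  show ?thesis
  proof (rule prime_height_eq_oneI)
    show "nc_prime_ideal (A_alg h) {\<zero>\<^bsub>A_alg h\<^esub>}" by (rule nc_domain_zero_prime[OF dom])
    show "nc_prime_ideal (A_alg h) ?Z" by (rule A_multiples_prime[OF ring f char])
    have "[:f ^ CHAR('a):] \<in> ?Z" by (simp add: mem_A_multiples_iff coeff_pCons split: nat.split)
    moreover have "f ^ CHAR('a) \<noteq> 0" using f(1) by (simp add: prime_elem_def)
    ultimately show "?Z \<noteq> {\<zero>\<^bsub>A_alg h\<^esub>}" by auto
  next
    fix Q assume Q: "nc_prime_ideal (A_alg h) Q" "Q \<subset> ?Z"
    show "Q = {\<zero>\<^bsub>A_alg h\<^esub>}"
    proof (rule ccontr)
      assume "Q \<noteq> {\<zero>\<^bsub>A_alg h\<^esub>}"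
      then obtain v where v: "nc_prime_ideal (A_alg h) (Idl\<^bsub>A_alg h\<^esub> {v})"
        "Idl\<^bsub>A_alg h\<^esub> {v} \<noteq> {\<zero>\<^bsub>A_alg h\<^esub>}" "Idl\<^bsub>A_alg h\<^esub> {v} \<subseteq> Q"
        using UFR Q(1) unfolding noetherian_UFR_def by blast
      have "v \<in> Idl\<^bsub>A_alg h\<^esub> {v}" by (rule ring.genideal_self'[OF ring]) simp
      then have "v \<in> ?Z" "v \<noteq> 0" using v(2,3) Q(2) ring.genideal_zero[OF ring] by auto
      then have "?Z \<subseteq> Idl\<^bsub>A_alg h\<^esub> {v}"
        by (intro A_multiples_subset_principal_prime[OF ring pderiv_power_CHAR deg] v(1))
      then show False using v(3) Q(2) by blast
    qed
  qed
qed

theorem corollary7p7: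
  fixes h :: "'a::field poly" and p :: nat
  assumes "CHAR('a) = p" and "p > 0" and "h \<noteq> 0"
  shows "\<not> noetherian_UFD (A_alg h)"
proof
  assume UFD: "noetherian_UFD (A_alg h)"
  then have UFR: "noetherian_UFR (A_alg h)" by (simp add: noetherian_UFD_def)
  then have ring: "ring (A_alg h)" by (simp add: noetherian_UFR_def nc_domain_def)
  have char: "CHAR('a) > 0" using assms(1,2) by simp
  obtain f where f: "prime_elem f" "pderiv f \<noteq> 0" "\<not> f dvd h"
    using exists_separable_prime_not_dvd[OF char assms(3)] by blast
  let ?Z = "A_multiples (f ^ CHAR('a))"
  have Z: "nc_prime_ideal (A_alg h) ?Z" by (rule A_multiples_prime[OF ring f char])
  moreover have "prime_height (A_alg h) ?Z = 1" by (rule prime_height_A_multiples[OF UFR f char])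
  ultimately have quot: "nc_domain (A_alg h Quot ?Z)" using UFD by (simp add: noetherian_UFD_def)
  have "1 < CHAR('a)" using prime_gt_1_nat[OF prime_CHAR_semidom[OF char]] .
  then have "A_mult h [:f ^ 1:] [:f ^ (CHAR('a) - 1):] = [:f ^ CHAR('a):]"
    by (simp add: A_mult_const_left flip: power_Suc)
  then have "A_mult h [:f ^ 1:] [:f ^ (CHAR('a) - 1):] \<in> ?Z"
    by (simp add: mem_A_multiples_iff coeff_pCons split: nat.split)
  then have "[:f ^ 1:] \<in> ?Z \<or> [:f ^ (CHAR('a) - 1):] \<in> ?Z"
    using nc_domain_Quot_mult_mem[OF quot] Z by (simp add: nc_prime_ideal_def)
  then show False
    using const_power_mem_A_multiples_power_le[OF f(1)] \<open>1 < CHAR('a)\<close> by fastforce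
qed

end
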